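(* Let $G$ be a finite group and $D\trianglelefteq G$, and suppose that the conjugation action of $G$ on the Burnside ring of $D$ factors through a quotient of $G$ of order $n$. (1) If $\Theta=\sum_in_iH_i$ is a $G$-relation with all $H_i\subseteq D$, then $n\Theta=\operatorname{Ind}_D^G\Theta'$ for some $D$-relation $\Theta'$. (2) Suppose moreover $N\trianglelefteq G$ with $N\subseteq D$, and every subgroup of $G$ either contains $N$ or is contained in $D$. Then for every $G$-relation $\Theta$, $n\Theta$ is the sum of a $G$-relation of the form $\operatorname{Ind}_D^G\Theta'$ with $\Theta'$ a $D$-relation and a $G$-relation of the form $\sum_jm_jU_j$ with $U_j\supseteq N$ and $\sum_jm_jU_j/N$ a $G/N$-relation.
   Context: The Burnside ring of a finite group $G$ is the free abelian group on the set of conjugacy classes of subgroups of $G$. A $G$-relation is an element $\Theta=\sum_in_iH_i$ of it with $\bigoplus_i\mathbb C[G/H_i]^{\oplus n_i}=0$ as virtual representation. For $D\le G$ and a $D$-relation $\Theta'$, $\operatorname{Ind}_D^G\Theta'$ denotes the same formal sum regarded as an element of the Burnside ring of $G$ (it is a $G$-relation). *)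

theory Defs
  imports "HOL-Algebra.Algebra"
begin

text \<open>An element of the Burnside ring of G is represented by a finitely supported
  integer-valued function c on subgroups of G, standing for the formal sum
  sum_H c(H) [H]; two such functions represent the same element iff their
  sums over every G-conjugacy class of subgroups agree.\<close>

definition burnside_elem :: "('a, 'b) monoid_scheme \<Rightarrow> ('a set \<Rightarrow> int) \<Rightarrow> bool" where
  "burnside_elem G c \<longleftrightarrow> finite {H. c H \<noteq> 0} \<and> (\<forall>H. c H \<noteq> 0 \<longrightarrow> subgroup H G)"

definition conj_sub :: "('a, 'b) monoid_scheme \<Rightarrow> 'a \<Rightarrow> 'a set \<Rightarrow> 'a set" where
  "conj_sub G g H = (\<lambda>h. g \<otimes>\<^bsub>G\<^esub> h \<otimes>\<^bsub>G\<^esub> inv\<^bsub>G\<^esub> g) ` H"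

definition conjugate_subgroups :: "('a, 'b) monoid_scheme \<Rightarrow> 'a set \<Rightarrow> 'a set \<Rightarrow> bool" where
  "conjugate_subgroups G K H \<longleftrightarrow> (\<exists>g\<in>carrier G. K = conj_sub G g H)"

definition burnside_eq :: "('a, 'b) monoid_scheme \<Rightarrow> ('a set \<Rightarrow> int) \<Rightarrow> ('a set \<Rightarrow> int) \<Rightarrow> bool" where
  "burnside_eq G c d \<longleftrightarrow> (\<forall>H. subgroup H G \<longrightarrow>
     (\<Sum>K\<in>{K. c K \<noteq> 0 \<and> conjugate_subgroups G K H}. c K) =
     (\<Sum>K\<in>{K. d K \<noteq> 0 \<and> conjugate_subgroups G K H}. d K))"

text \<open>Character of the permutation representation C[G/H] at g: the number of
  left cosets xH fixed by left multiplication by g.\<close>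
definition perm_char :: "('a, 'b) monoid_scheme \<Rightarrow> 'a set \<Rightarrow> 'a \<Rightarrow> nat" where
  "perm_char G H g = card {C. (\<exists>x\<in>carrier G. C = x <#\<^bsub>G\<^esub> H) \<and> g <#\<^bsub>G\<^esub> C = C}"

text \<open>G-relation: the virtual permutation representation is zero, i.e. its
  character vanishes identically.\<close>
definition is_relation :: "('a, 'b) monoid_scheme \<Rightarrow> ('a set \<Rightarrow> int) \<Rightarrow> bool" where
  "is_relation G c \<longleftrightarrow> burnside_elem G c \<and>
     (\<forall>g\<in>carrier G. (\<Sum>H\<in>{H. c H \<noteq> 0}. c H * int (perm_char G H g)) = 0)"

text \<open>Given a formal sum psi of subgroups U containing N, the formal sum
  sum psi(U) [U/N] of subgroups of G/N (G Mod N has carrier rcosets N).\<close>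
definition quot_sum :: "('a, 'b) monoid_scheme \<Rightarrow> 'a set \<Rightarrow> ('a set \<Rightarrow> int) \<Rightarrow> ('a set set \<Rightarrow> int)" where
  "quot_sum G N psi V = (\<Sum>U\<in>{U. psi U \<noteq> 0 \<and> (\<lambda>u. N #>\<^bsub>G\<^esub> u) ` U = V}. psi U)"

definition conj_action_factors :: "('a, 'b) monoid_scheme \<Rightarrow> 'a set \<Rightarrow> nat \<Rightarrow> bool" where
  "conj_action_factors G D n \<longleftrightarrow> (\<exists>K. K \<lhd> G \<and> order (G Mod K) = n \<and>
     (\<forall>k\<in>K. \<forall>H. subgroup H (G\<lparr>carrier := D\<rparr>) \<longrightarrow>
        conjugate_subgroups (G\<lparr>carrier := D\<rparr>) (conj_sub G k H) H))"

end

theory Submission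
  imports Defs
begin

text \<open>
  The character of \<open>\<bbbC>[G/H]\<close> at \<open>g\<close> is \<open>|H|\<inverse>\<close> times the number of \<open>y \<in> G\<close> with
  \<open>y\<inverse>gy \<in> H\<close>, and counting only \<open>y \<in> D\<close> gives the character of the restriction to \<open>D\<close>.
  Averaging a \<open>D\<close>-character over all \<open>G\<close>-conjugates of its argument therefore yields
  \<open>|D|\<close> times the \<open>G\<close>-character; in particular \<open>D\<close>-relations are \<open>G\<close>-relations.

  (1) Let \<open>K\<close> be the kernel of the action and \<open>r\<close> run over a transversal of \<open>G/K\<close>. Then
  \<open>\<Theta>' = \<Sum>\<^sub>r r\<Theta>r\<inverse>\<close> equals \<open>n\<Theta>\<close> in the Burnside ring of \<open>G\<close> and lives on subgroups of \<open>D\<close>.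
  Its \<open>D\<close>-character at \<open>d\<close> is \<open>\<Sum>\<^sub>r \<chi>(r\<inverse>dr)\<close>, where \<open>\<chi>\<close> is the \<open>D\<close>-character of \<open>\<Theta>\<close>. As
  \<open>K\<close> fixes the Burnside ring of \<open>D\<close>, \<open>\<chi>\<close> is invariant under conjugation by \<open>K\<close>, so this sum is
  \<open>|K|\<inverse> \<Sum>\<^bsub>g\<in>G\<^esub> \<chi>(g\<inverse>dg)\<close>, i.e. \<open>|D|/|K|\<close> times the \<open>G\<close>-character of \<open>\<Theta>\<close>, which vanishes.

  (2) Replacing every \<open>H\<close> by \<open>HN\<close> turns \<open>\<Theta>\<close> into a relation \<open>\<Theta>\<^sub>N\<close>, because
  \<open>|HN| |H \<inter> N| = |H| |N|\<close> makes the character of \<open>\<bbbC>[G/HN]\<close> at \<open>g\<close> the average of that of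
  \<open>\<bbbC>[G/H]\<close> over \<open>gN\<close>. By the dichotomy \<open>\<Theta> - \<Theta>\<^sub>N\<close> only involves subgroups of \<open>D\<close>, so (1)
  applies to it, while \<open>G/U\<close> and \<open>(G/N)/(U/N)\<close> are the same \<open>G\<close>-set for \<open>U \<supseteq> N\<close>, so
  \<open>n\<Theta>\<^sub>N\<close> passes to a \<open>G/N\<close>-relation.
\<close>

section \<open>Characters as conjugation counts\<close>

definition conj_count :: "('a, 'b) monoid_scheme \<Rightarrow> 'a set \<Rightarrow> 'a \<Rightarrow> 'a set \<Rightarrow> nat" where
  "conj_count G A g H = card {y\<in>A. inv\<^bsub>G\<^esub> y \<otimes>\<^bsub>G\<^esub> g \<otimes>\<^bsub>G\<^esub> y \<in> H}"

text \<open>With \<open>A = carrier G\<close> this is the character of \<open>\<Sum>H c(H) \<bbbC>[G/H]\<close> at \<open>g\<close>, because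
  \<open>conj_count G (carrier G) g H = |H| \<cdot> perm_char G H g\<close>; with \<open>A = D\<close> it is the character of
  the same formal sum read in the Burnside ring of \<open>D\<close>.\<close>
definition fixed_point_sum :: "('a, 'b) monoid_scheme \<Rightarrow> 'a set \<Rightarrow> ('a set \<Rightarrow> int) \<Rightarrow> 'a \<Rightarrow> real" where
  "fixed_point_sum G A c g =
     (\<Sum>H\<in>Pow (carrier G). real_of_int (c H) / real (card H) * real (conj_count G A g H))"

lemma card_filter_eq_sum: "finite A \<Longrightarrow> card {x\<in>A. P x} = (\<Sum>x\<in>A. if P x then 1 else 0)"
  by (simp add: sum.inter_filter[symmetric])

lemma conj_count_eq_sum:
  "finite A \<Longrightarrow>
   conj_count G A g H = (\<Sum>y\<in>A. if inv\<^bsub>G\<^esub> y \<otimes>\<^bsub>G\<^esub> g \<otimes>\<^bsub>G\<^esub> y \<in> H then 1 else 0)"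
  unfolding conj_count_def by (rule card_filter_eq_sum)

context group begin

lemma conj_count_subgroup:
  assumes "subgroup D G"
  shows "conj_count (G\<lparr>carrier := D\<rparr>) D g H = conj_count G D g H"
proof -
  have "{y\<in>D. inv\<^bsub>G\<lparr>carrier := D\<rparr>\<^esub> y \<otimes>\<^bsub>G\<^esub> g \<otimes>\<^bsub>G\<^esub> y \<in> H}
      = {y\<in>D. inv\<^bsub>G\<^esub> y \<otimes>\<^bsub>G\<^esub> g \<otimes>\<^bsub>G\<^esub> y \<in> H}"
    using assms by auto
  then show ?thesis unfolding conj_count_def by simp
qed

lemma inv_mult_cancel_left [simp]: "x \<in> carrier G \<Longrightarrow> y \<in> carrier G \<Longrightarrow> inv x \<otimes> (x \<otimes> y) = y"
  by (simp add: m_assoc[symmetric])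

lemma mult_inv_cancel_left [simp]: "x \<in> carrier G \<Longrightarrow> y \<in> carrier G \<Longrightarrow> x \<otimes> (inv x \<otimes> y) = y"
  by (simp add: m_assoc[symmetric])

lemma lcos_eq_iff:
  assumes "subgroup H G" "a \<in> carrier G" "x \<in> carrier G"
  shows "a <# H = x <# H \<longleftrightarrow> inv x \<otimes> a \<in> H"
proof
  assume "a <# H = x <# H"
  then have "a \<in> x <# H" using lcos_self assms by metis
  then show "inv x \<otimes> a \<in> H" using subgroup.lcos_module_imp[OF assms(1) is_group assms(3)] by blast
next
  assume "inv x \<otimes> a \<in> H"
  then have "a \<in> x <# H" using subgroup.lcos_module_rev[OF assms(1) is_group assms(3) assms(2)] by blast
  then show "a <# H = x <# H" using l_repr_independence assms by metis
qed

text \<open>The cosets \<open>xH\<close> fixed by \<open>g\<close> are those with \<open>x\<inverse>gx \<in> H\<close>, and each contains \<open>|H|\<close> such \<open>x\<close>.\<close>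
lemma card_mult_perm_char:
  assumes fin: "finite (carrier G)" and H: "subgroup H G" and g: "g \<in> carrier G"
  shows "card H * perm_char G H g = conj_count G (carrier G) g H"
proof -
  define F where "F = {C. (\<exists>x\<in>carrier G. C = x <# H) \<and> g <# C = C}"
  have HG: "H \<subseteq> carrier G" using H subgroup.subset by blast
  have fixed_iff: "g <# (x <# H) = x <# H \<longleftrightarrow> inv x \<otimes> g \<otimes> x \<in> H" if x: "x \<in> carrier G" for x
  proof -
    have "g <# (x <# H) = (g \<otimes> x) <# H" using lcos_m_assoc HG g x by blast
    then show ?thesis using lcos_eq_iff[OF H, of "g \<otimes> x" x] x g by (simp add: m_assoc)
  qed
  have union: "\<Union>F = {y\<in>carrier G. inv y \<otimes> g \<otimes> y \<in> H}"
  proof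
    show "\<Union>F \<subseteq> {y\<in>carrier G. inv y \<otimes> g \<otimes> y \<in> H}"
    proof
      fix y assume "y \<in> \<Union>F"
      then obtain x where x: "x \<in> carrier G" "y \<in> x <# H" "g <# (x <# H) = x <# H"
        unfolding F_def by blast
      have yG: "y \<in> carrier G" using x l_coset_carrier H by blast
      have "x <# H = y <# H" using l_repr_independence x H by blast
      then show "y \<in> {y\<in>carrier G. inv y \<otimes> g \<otimes> y \<in> H}" using fixed_iff[OF yG] x yG by simp
    qed
  next
    show "{y\<in>carrier G. inv y \<otimes> g \<otimes> y \<in> H} \<subseteq> \<Union>F"
    proof
      fix y assume y: "y \<in> {y\<in>carrier G. inv y \<otimes> g \<otimes> y \<in> H}"
      then have "y <# H \<in> F" unfolding F_def using fixed_iff by blast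
      moreover have "y \<in> y <# H" using lcos_self y H by blast
      ultimately show "y \<in> \<Union>F" by blast
    qed
  qed
  have F_lcosets: "F \<subseteq> lcosets H" unfolding F_def LCOSETS_def by blast
  have "finite F" using F_lcosets lcosets_subset_PowG[OF H] fin
    by (meson finite_Pow_iff finite_subset)
  moreover have "finite (\<Union>F)" using union fin by simp
  moreover have "\<And>C. C \<in> F \<Longrightarrow> card C = card H"
    using F_lcosets l_card_cosets_equal[OF _ HG fin] by (metis subsetD)
  moreover have "\<And>C1 C2. C1 \<in> F \<Longrightarrow> C2 \<in> F \<Longrightarrow> C1 \<noteq> C2 \<Longrightarrow> C1 \<inter> C2 = {}"
    using F_lcosets lcos_disjoint[OF H] by blast
  ultimately have "card H * card F = card (\<Union>F)" by (simp add: card_partition)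
  then show ?thesis using union unfolding conj_count_def perm_char_def F_def by simp
qed

lemma character_sum_eq_fixed_point_sum:
  assumes fin: "finite (carrier G)" and D: "subgroup D G"
    and c: "burnside_elem (G\<lparr>carrier := D\<rparr>) c" and g: "g \<in> D"
  shows "real_of_int (\<Sum>H\<in>{H. c H \<noteq> 0}. c H * int (perm_char (G\<lparr>carrier := D\<rparr>) H g))
       = fixed_point_sum G D c g"
proof -
  interpret D: group "G\<lparr>carrier := D\<rparr>" using subgroup_imp_group[OF D] .
  have finD: "finite D" using fin D subgroup.subset finite_subset by blast
  have supp_sub: "subgroup H (G\<lparr>carrier := D\<rparr>)" if "c H \<noteq> 0" for H
    using c that unfolding burnside_elem_def by blast
  have "real_of_int (\<Sum>H\<in>{H. c H \<noteq> 0}. c H * int (perm_char (G\<lparr>carrier := D\<rparr>) H g))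
      = (\<Sum>H\<in>{H. c H \<noteq> 0}. real_of_int (c H) / real (card H) * real (conj_count G D g H))"
  proof (simp only: of_int_sum, intro sum.cong refl)
    fix H assume "H \<in> {H. c H \<noteq> 0}"
    then have H: "subgroup H (G\<lparr>carrier := D\<rparr>)" using supp_sub by blast
    have "card H > 0" using subgroup.finite_imp_card_positive[OF H] finD by simp
    moreover have "card H * perm_char (G\<lparr>carrier := D\<rparr>) H g = conj_count G D g H"
      using D.card_mult_perm_char[OF _ H] finD g conj_count_subgroup[OF D] by simp
    then have "real (conj_count G D g H) = real (card H) * real (perm_char (G\<lparr>carrier := D\<rparr>) H g)"
      by (simp only: of_nat_mult[symmetric])
    ultimately show "real_of_int (c H * int (perm_char (G\<lparr>carrier := D\<rparr>) H g))
        = real_of_int (c H) / real (card H) * real (conj_count G D g H)"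
      by simp
  qed
  also have "\<dots> = fixed_point_sum G D c g"
    unfolding fixed_point_sum_def
  proof (rule sum.mono_neutral_left)
    have "H \<subseteq> carrier G" if "c H \<noteq> 0" for H
      using subgroup.subset[OF supp_sub[OF that]] subgroup.subset[OF D] by simp
    then show "{H. c H \<noteq> 0} \<subseteq> Pow (carrier G)" by blast
  qed (use fin in auto)
  finally show ?thesis .
qed

lemma is_relation_subgroup_iff:
  assumes "finite (carrier G)" and "subgroup D G" and c: "burnside_elem (G\<lparr>carrier := D\<rparr>) c"
  shows "is_relation (G\<lparr>carrier := D\<rparr>) c \<longleftrightarrow> (\<forall>d\<in>D. fixed_point_sum G D c d = 0)"
proof -
  have "(\<Sum>H\<in>{H. c H \<noteq> 0}. c H * int (perm_char (G\<lparr>carrier := D\<rparr>) H d)) = 0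
        \<longleftrightarrow> fixed_point_sum G D c d = 0" if "d \<in> D" for d
    unfolding character_sum_eq_fixed_point_sum[OF assms that, symmetric] by (rule of_int_eq_0_iff[symmetric])
  then show ?thesis using c unfolding is_relation_def by auto
qed

lemma is_relation_iff:
  assumes "finite (carrier G)" and "burnside_elem G c"
  shows "is_relation G c \<longleftrightarrow> (\<forall>g\<in>carrier G. fixed_point_sum G (carrier G) c g = 0)"
  using is_relation_subgroup_iff[OF assms(1) subgroup_self] assms(2) by simp


lemma mem_conj_sub_iff:
  assumes "z \<in> carrier G" "g \<in> carrier G" "L \<subseteq> carrier G"
  shows "z \<in> conj_sub G g L \<longleftrightarrow> inv g \<otimes> z \<otimes> g \<in> L"
proof
  assume "z \<in> conj_sub G g L"
  then obtain h where h: "h \<in> L" "z = g \<otimes> h \<otimes> inv g" unfolding conj_sub_def by blast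
  have "h \<in> carrier G" using h assms by blast
  then have "inv g \<otimes> z \<otimes> g = h" using h assms by (simp add: m_assoc)
  then show "inv g \<otimes> z \<otimes> g \<in> L" using h by simp
next
  assume "inv g \<otimes> z \<otimes> g \<in> L"
  moreover have "g \<otimes> (inv g \<otimes> z \<otimes> g) \<otimes> inv g = z" using assms by (simp add: m_assoc)
  ultimately show "z \<in> conj_sub G g L" unfolding conj_sub_def by force
qed

lemma conj_sub_subset: "g \<in> carrier G \<Longrightarrow> L \<subseteq> carrier G \<Longrightarrow> conj_sub G g L \<subseteq> carrier G"
  unfolding conj_sub_def by auto

lemma conj_sub_conj_sub:
  assumes "g \<in> carrier G" "h \<in> carrier G" "L \<subseteq> carrier G"
  shows "conj_sub G g (conj_sub G h L) = conj_sub G (g \<otimes> h) L"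
  unfolding conj_sub_def image_image using assms
  by (intro image_cong refl) (auto simp: m_assoc inv_mult_group subsetD)

lemma conj_sub_one: "L \<subseteq> carrier G \<Longrightarrow> conj_sub G \<one> L = L"
  unfolding conj_sub_def by (auto simp: subsetD)

lemma conj_sub_inv_cancel:
  assumes "g \<in> carrier G" "L \<subseteq> carrier G"
  shows "conj_sub G g (conj_sub G (inv g) L) = L" "conj_sub G (inv g) (conj_sub G g L) = L"
  using assms by (simp_all add: conj_sub_conj_sub conj_sub_one)

lemma bij_betw_conj_sub_Pow:
  "g \<in> carrier G \<Longrightarrow> bij_betw (conj_sub G g) (Pow (carrier G)) (Pow (carrier G))"
  by (rule bij_betwI[where g="conj_sub G (inv g)"])
     (auto simp: conj_sub_inv_cancel dest: conj_sub_subset[rotated])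

lemma card_conj_sub:
  assumes "g \<in> carrier G" "L \<subseteq> carrier G"
  shows "card (conj_sub G g L) = card L"
proof -
  have "inj_on (\<lambda>h. g \<otimes> h \<otimes> inv g) L"
    using assms by (auto simp: inj_on_def subsetD)
  then show ?thesis unfolding conj_sub_def by (simp add: card_image)
qed

lemma subgroup_conj_sub:
  assumes L: "subgroup L G" and g: "g \<in> carrier G"
  shows "subgroup (conj_sub G g L) G"
proof (rule subgroupI)
  have LG: "L \<subseteq> carrier G" using L subgroup.subset by blast
  show sub: "conj_sub G g L \<subseteq> carrier G" using conj_sub_subset g LG by blast
  show "conj_sub G g L \<noteq> {}" unfolding conj_sub_def using subgroup.one_closed[OF L] by blast
  fix a b assume a: "a \<in> conj_sub G g L" and b: "b \<in> conj_sub G g L"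
  have aG: "a \<in> carrier G" and bG: "b \<in> carrier G" using a b sub by blast+
  have a': "inv g \<otimes> a \<otimes> g \<in> L" and b': "inv g \<otimes> b \<otimes> g \<in> L"
    using a b mem_conj_sub_iff aG bG g LG by blast+
  have "inv g \<otimes> inv a \<otimes> g = inv (inv g \<otimes> a \<otimes> g)" using aG g
    by (simp add: inv_mult_group m_assoc)
  then have "inv g \<otimes> inv a \<otimes> g \<in> L" using a' subgroup.m_inv_closed[OF L] by simp
  then show "inv a \<in> conj_sub G g L" using mem_conj_sub_iff aG g LG by simp
  have "inv g \<otimes> (a \<otimes> b) \<otimes> g = (inv g \<otimes> a \<otimes> g) \<otimes> (inv g \<otimes> b \<otimes> g)" using aG bG g
    by (simp add: m_assoc)
  then have "inv g \<otimes> (a \<otimes> b) \<otimes> g \<in> L" using a' b' subgroup.m_closed[OF L] by simp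
  then show "a \<otimes> b \<in> conj_sub G g L" using mem_conj_sub_iff aG bG g LG by simp
qed

lemma conj_sub_normal_subset:
  assumes "D \<lhd> G" "g \<in> carrier G" "L \<subseteq> D"
  shows "conj_sub G g L \<subseteq> D"
  unfolding conj_sub_def using normal.inv_op_closed2[OF assms(1,2)] assms(3) by blast

lemma finite_conjugate_subgroups:
  assumes "finite (carrier G)"
  shows "finite {L. conjugate_subgroups G L H}"
proof -
  have "{L. conjugate_subgroups G L H} = (\<lambda>g. conj_sub G g H) ` carrier G"
    unfolding conjugate_subgroups_def by blast
  then show ?thesis using assms by simp
qed

lemma bij_betw_conj_sub_conjugates:
  assumes H: "subgroup H G" and g: "g \<in> carrier G"
  shows "bij_betw (conj_sub G g) {L. conjugate_subgroups G L H} {L. conjugate_subgroups G L H}"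
proof -
  have HG: "H \<subseteq> carrier G" using H subgroup.subset by blast
  have closed: "conjugate_subgroups G (conj_sub G x L) H"
    if x: "x \<in> carrier G" and L: "conjugate_subgroups G L H" for x L
  proof -
    obtain h where h: "h \<in> carrier G" "L = conj_sub G h H"
      using L unfolding conjugate_subgroups_def by blast
    then have "conj_sub G x L = conj_sub G (x \<otimes> h) H" using conj_sub_conj_sub x HG by simp
    then show ?thesis unfolding conjugate_subgroups_def using x h by blast
  qed
  have sub: "L \<subseteq> carrier G" if "conjugate_subgroups G L H" for L
    using that conj_sub_subset HG unfolding conjugate_subgroups_def by blast
  show ?thesis
    by (rule bij_betwI[where g="conj_sub G (inv g)"]) (use closed sub g in \<open>auto simp: conj_sub_inv_cancel\<close>)
qed

lemma conj_count_conj_sub_normal: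
  assumes fin: "finite (carrier G)" and D: "D \<lhd> G" and t: "t \<in> carrier G"
    and e: "e \<in> carrier G" and L: "L \<subseteq> carrier G"
  shows "conj_count G D e (conj_sub G t L) = conj_count G D (inv t \<otimes> e \<otimes> t) L"
proof -
  have DG: "D \<subseteq> carrier G" using D normal_imp_subgroup subgroup.subset by blast
  have finD: "finite D" using fin DG finite_subset by blast
  have bij: "bij_betw (\<lambda>y. inv t \<otimes> y \<otimes> t) D D"
  proof (rule bij_betwI[where g="\<lambda>y. t \<otimes> y \<otimes> inv t"])
    show "(\<lambda>y. inv t \<otimes> y \<otimes> t) \<in> D \<rightarrow> D" using D t normal.inv_op_closed1 by fastforce
    show "(\<lambda>y. t \<otimes> y \<otimes> inv t) \<in> D \<rightarrow> D" using D t normal.inv_op_closed2 by fastforce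
  qed (use t DG in \<open>auto simp: m_assoc subsetD\<close>)
  have "conj_count G D e (conj_sub G t L)
      = (\<Sum>y\<in>D. if inv (inv t \<otimes> y \<otimes> t) \<otimes> (inv t \<otimes> e \<otimes> t) \<otimes> (inv t \<otimes> y \<otimes> t) \<in> L then 1 else 0)"
    unfolding conj_count_eq_sum[OF finD]
  proof (intro sum.cong refl)
    fix y assume "y \<in> D"
    then have y: "y \<in> carrier G" using DG by blast
    have "inv t \<otimes> (inv y \<otimes> e \<otimes> y) \<otimes> t = inv (inv t \<otimes> y \<otimes> t) \<otimes> (inv t \<otimes> e \<otimes> t) \<otimes> (inv t \<otimes> y \<otimes> t)"
      using y e t by (simp add: inv_mult_group m_assoc)
    then show "(if inv y \<otimes> e \<otimes> y \<in> conj_sub G t L then 1 else 0)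
        = (if inv (inv t \<otimes> y \<otimes> t) \<otimes> (inv t \<otimes> e \<otimes> t) \<otimes> (inv t \<otimes> y \<otimes> t) \<in> L then 1 else (0::nat))"
      using mem_conj_sub_iff y e t L by simp
  qed
  also have "\<dots> = conj_count G D (inv t \<otimes> e \<otimes> t) L"
    unfolding conj_count_eq_sum[OF finD]
    by (rule sum.reindex_bij_betw[OF bij, of "\<lambda>y. if inv y \<otimes> (inv t \<otimes> e \<otimes> t) \<otimes> y \<in> L then 1 else 0"])
  finally show ?thesis .
qed

lemma conj_count_conj_sub_inner:
  assumes fin: "finite (carrier G)" and D: "subgroup D G" and d: "d \<in> D"
    and e: "e \<in> carrier G" and L: "L \<subseteq> carrier G"
  shows "conj_count G D e (conj_sub G d L) = conj_count G D e L"
proof -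
  have DG: "D \<subseteq> carrier G" using D subgroup.subset by blast
  have finD: "finite D" using fin DG finite_subset by blast
  have dG: "d \<in> carrier G" using d DG by blast
  have bij: "bij_betw (\<lambda>y. y \<otimes> d) D D"
  proof (rule bij_betwI[where g="\<lambda>y. y \<otimes> inv d"])
    show "(\<lambda>y. y \<otimes> d) \<in> D \<rightarrow> D" using D d subgroup.m_closed by fastforce
    show "(\<lambda>y. y \<otimes> inv d) \<in> D \<rightarrow> D" using D d subgroup.m_closed subgroup.m_inv_closed by fastforce
  qed (use dG DG in \<open>auto simp: m_assoc subsetD\<close>)
  have "conj_count G D e (conj_sub G d L)
      = (\<Sum>y\<in>D. if inv (y \<otimes> d) \<otimes> e \<otimes> (y \<otimes> d) \<in> L then 1 else 0)"
    unfolding conj_count_eq_sum[OF finD]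
  proof (intro sum.cong refl)
    fix y assume "y \<in> D"
    then have y: "y \<in> carrier G" using DG by blast
    have "inv d \<otimes> (inv y \<otimes> e \<otimes> y) \<otimes> d = inv (y \<otimes> d) \<otimes> e \<otimes> (y \<otimes> d)"
      using y e dG by (simp add: inv_mult_group m_assoc)
    then show "(if inv y \<otimes> e \<otimes> y \<in> conj_sub G d L then 1 else 0)
        = (if inv (y \<otimes> d) \<otimes> e \<otimes> (y \<otimes> d) \<in> L then 1 else (0::nat))"
      using mem_conj_sub_iff y e dG L by simp
  qed
  also have "\<dots> = conj_count G D e L"
    unfolding conj_count_eq_sum[OF finD]
    by (rule sum.reindex_bij_betw[OF bij, of "\<lambda>y. if inv y \<otimes> e \<otimes> y \<in> L then 1 else 0"])
  finally show ?thesis .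
qed

lemma sum_conj_count_conjugates:
  assumes fin: "finite (carrier G)" and D: "subgroup D G" and e: "e \<in> carrier G"
  shows "(\<Sum>g\<in>carrier G. conj_count G D (inv g \<otimes> e \<otimes> g) L) = card D * conj_count G (carrier G) e L"
proof -
  have DG: "D \<subseteq> carrier G" using D subgroup.subset by blast
  have finD: "finite D" using fin DG finite_subset by blast
  have "(\<Sum>g\<in>carrier G. conj_count G D (inv g \<otimes> e \<otimes> g) L)
     = (\<Sum>g\<in>carrier G. \<Sum>y\<in>D. if inv (g \<otimes> y) \<otimes> e \<otimes> (g \<otimes> y) \<in> L then 1 else 0)"
    unfolding conj_count_eq_sum[OF finD]
  proof (intro sum.cong refl)
    fix g y assume g: "g \<in> carrier G" and "y \<in> D"
    then have "inv y \<otimes> (inv g \<otimes> e \<otimes> g) \<otimes> y = inv (g \<otimes> y) \<otimes> e \<otimes> (g \<otimes> y)"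
      using e DG by (auto simp: inv_mult_group m_assoc)
    then show "(if inv y \<otimes> (inv g \<otimes> e \<otimes> g) \<otimes> y \<in> L then 1 else 0)
        = (if inv (g \<otimes> y) \<otimes> e \<otimes> (g \<otimes> y) \<in> L then 1 else (0::nat))" by simp
  qed
  also have "\<dots> = (\<Sum>y\<in>D. \<Sum>g\<in>carrier G. if inv (g \<otimes> y) \<otimes> e \<otimes> (g \<otimes> y) \<in> L then 1 else 0)"
    by (rule sum.swap)
  also have "\<dots> = (\<Sum>y\<in>D. conj_count G (carrier G) e L)"
  proof (rule sum.cong[OF refl])
    fix y assume "y \<in> D"
    then have yG: "y \<in> carrier G" using DG by blast
    have "bij_betw (\<lambda>g. g \<otimes> y) (carrier G) (carrier G)"
      by (rule bij_betwI[where g="\<lambda>z. z \<otimes> inv y"]) (auto simp: yG m_assoc)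
    then show "(\<Sum>g\<in>carrier G. if inv (g \<otimes> y) \<otimes> e \<otimes> (g \<otimes> y) \<in> L then 1 else 0)
        = conj_count G (carrier G) e L"
      unfolding conj_count_eq_sum[OF fin] by (rule sum.reindex_bij_betw)
  qed
  finally show ?thesis by simp
qed

lemma sum_fixed_point_sum_conjugates:
  assumes "finite (carrier G)" and "subgroup D G" and "e \<in> carrier G"
  shows "(\<Sum>g\<in>carrier G. fixed_point_sum G D c (inv g \<otimes> e \<otimes> g))
       = real (card D) * fixed_point_sum G (carrier G) c e"
proof -
  let ?a = "\<lambda>L. real_of_int (c L) / real (card L)"
  have per_subgroup: "(\<Sum>g\<in>carrier G. real (conj_count G D (inv g \<otimes> e \<otimes> g) L))
      = real (card D) * real (conj_count G (carrier G) e L)" for L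
    by (simp only: of_nat_sum[symmetric] of_nat_mult[symmetric] sum_conj_count_conjugates[OF assms])
  have "(\<Sum>g\<in>carrier G. fixed_point_sum G D c (inv g \<otimes> e \<otimes> g))
      = (\<Sum>L\<in>Pow (carrier G). \<Sum>g\<in>carrier G. ?a L * real (conj_count G D (inv g \<otimes> e \<otimes> g) L))"
    unfolding fixed_point_sum_def by (rule sum.swap)
  also have "\<dots> = (\<Sum>L\<in>Pow (carrier G). ?a L * (real (card D) * real (conj_count G (carrier G) e L)))"
    by (simp only: sum_distrib_left[symmetric] per_subgroup)
  also have "\<dots> = real (card D) * fixed_point_sum G (carrier G) c e"
    unfolding fixed_point_sum_def sum_distrib_left by (intro sum.cong refl) (rule mult.left_commute)
  finally show ?thesis .
qed

lemma conj_count_outside_normal: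
  assumes D: "D \<lhd> G" and g: "g \<in> carrier G" "g \<notin> D" and H: "H \<subseteq> D"
  shows "conj_count G (carrier G) g H = 0"
proof -
  have "inv y \<otimes> g \<otimes> y \<notin> D" if y: "y \<in> carrier G" for y
  proof
    assume "inv y \<otimes> g \<otimes> y \<in> D"
    then have "y \<otimes> (inv y \<otimes> g \<otimes> y) \<otimes> inv y \<in> D" using normal.inv_op_closed2[OF D y] by blast
    then show False using g y by (simp add: m_assoc)
  qed
  then show ?thesis unfolding conj_count_def using H by (auto simp: card_eq_0_iff)
qed

lemma is_relation_induced:
  assumes fin: "finite (carrier G)" and D: "D \<lhd> G"
    and rel: "is_relation (G\<lparr>carrier := D\<rparr>) c"
  shows "is_relation G c"
proof -
  have Dsub: "subgroup D G" using D normal_imp_subgroup by blast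
  have beD: "burnside_elem (G\<lparr>carrier := D\<rparr>) c" using rel unfolding is_relation_def by blast
  have c: "subgroup H G \<and> H \<subseteq> D" if "c H \<noteq> 0" for H
  proof -
    have H: "subgroup H (G\<lparr>carrier := D\<rparr>)" using beD that unfolding burnside_elem_def by blast
    show ?thesis using incl_subgroup[OF Dsub H] subgroup.subset[OF H] by simp
  qed
  have be: "burnside_elem G c" using beD c unfolding burnside_elem_def by blast
  have zero_on_D: "fixed_point_sum G D c d = 0" if "d \<in> D" for d
    using rel is_relation_subgroup_iff[OF fin Dsub beD] that by blast
  show ?thesis
    unfolding is_relation_iff[OF fin be]
  proof
    fix g assume g: "g \<in> carrier G"
    show "fixed_point_sum G (carrier G) c g = 0"
    proof (cases "g \<in> D")
      case True
      have "real (card D) * fixed_point_sum G (carrier G) c g = 0"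
        using sum_fixed_point_sum_conjugates[OF fin Dsub g, of c, symmetric]
          zero_on_D normal.inv_op_closed1[OF D _ True] by simp
      moreover have "card D > 0" using subgroup.finite_imp_card_positive[OF Dsub fin] .
      ultimately show ?thesis by simp
    next
      case False
      then have "conj_count G (carrier G) g H = 0" if "H \<subseteq> D" for H
        using conj_count_outside_normal[OF D g _ that] by blast
      then show ?thesis unfolding fixed_point_sum_def using c by (auto intro!: sum.neutral)
    qed
  qed
qed

end

lemma is_relation_lincomb:
  assumes a: "is_relation G a" and b: "is_relation G b"
  shows "is_relation G (\<lambda>H. x * a H + y * b H)"
proof -
  let ?f = "\<lambda>H. x * a H + y * b H"
  let ?S = "{H. a H \<noteq> 0} \<union> {H. b H \<noteq> 0}"
  have finS: "finite ?S" using a b unfolding is_relation_def burnside_elem_def by blast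
  have supp: "{H. ?f H \<noteq> 0} \<subseteq> ?S" by auto
  have be: "burnside_elem G ?f"
    using a b supp finS finite_subset unfolding is_relation_def burnside_elem_def by blast
  have "(\<Sum>H\<in>{H. ?f H \<noteq> 0}. ?f H * int (perm_char G H g)) = 0" if g: "g \<in> carrier G" for g
  proof -
    have extend: "(\<Sum>H\<in>{H. h H \<noteq> 0}. h H * int (perm_char G H g)) = (\<Sum>H\<in>?S. h H * int (perm_char G H g))"
      if "{H. h H \<noteq> 0} \<subseteq> ?S" for h :: "'a set \<Rightarrow> int"
      using that by (intro sum.mono_neutral_left[OF finS]) auto
    have "(\<Sum>H\<in>{H. ?f H \<noteq> 0}. ?f H * int (perm_char G H g))
        = x * (\<Sum>H\<in>?S. a H * int (perm_char G H g)) + y * (\<Sum>H\<in>?S. b H * int (perm_char G H g))"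
      unfolding extend[OF supp] by (simp add: sum.distrib sum_distrib_left algebra_simps)
    also have "\<dots> = 0"
      using a b g extend[of a] extend[of b] unfolding is_relation_def by auto
    finally show ?thesis .
  qed
  then show ?thesis unfolding is_relation_def using be by blast
qed

section \<open>Relations supported in a normal subgroup\<close>

definition coset_rep :: "'a set \<Rightarrow> 'a" where
  "coset_rep C = (SOME y. y \<in> C)"

text \<open>\<open>\<Sum>\<^sub>r r \<cdot> c\<close> for the transversal \<open>{coset_rep C. C \<in> G/K}\<close>, where \<open>r \<cdot> c\<close> moves the
  coefficient of \<open>L\<close> to \<open>rLr\<inverse>\<close>; the guard keeps the support inside \<open>Pow (carrier G)\<close>.\<close>
definition transversal_conj_sum ::
  "('a, 'b) monoid_scheme \<Rightarrow> 'a set \<Rightarrow> ('a set \<Rightarrow> int) \<Rightarrow> 'a set \<Rightarrow> int" where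
  "transversal_conj_sum G K c H = (if H \<subseteq> carrier G
     then \<Sum>C\<in>rcosets\<^bsub>G\<^esub> K. c (conj_sub G (inv\<^bsub>G\<^esub> coset_rep C) H) else 0)"

context group begin

lemma coset_rep_rcosets:
  assumes K: "subgroup K G" and C: "C \<in> rcosets K"
  shows "coset_rep C \<in> C" "coset_rep C \<in> carrier G" "C = K #> coset_rep C"
proof -
  obtain a where a: "a \<in> carrier G" "C = K #> a" using C unfolding RCOSETS_def by blast
  have "a \<in> C" using a rcos_self K by blast
  then show r: "coset_rep C \<in> C" unfolding coset_rep_def by (rule someI)
  then show "coset_rep C \<in> carrier G" using a subgroup.elemrcos_carrier[OF K is_group] by blast
  show "C = K #> coset_rep C" using repr_independence[OF _ a(1) K] r a by blast
qed

lemma sum_carrier_rcosets: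
  fixes f :: "'a \<Rightarrow> 'z::comm_semiring_1"
  assumes fin: "finite (carrier G)" and K: "subgroup K G"
    and invariant: "\<And>k g. k \<in> K \<Longrightarrow> g \<in> carrier G \<Longrightarrow> f (k \<otimes> g) = f g"
  shows "(\<Sum>g\<in>carrier G. f g) = of_nat (card K) * (\<Sum>C\<in>rcosets K. f (coset_rep C))"
proof -
  have KG: "K \<subseteq> carrier G" using K subgroup.subset by blast
  have fins: "\<forall>A\<in>rcosets K. finite A" using cosets_finite[OF _ KG fin] by blast
  have disj: "\<forall>A\<in>rcosets K. \<forall>B\<in>rcosets K. A \<noteq> B \<longrightarrow> A \<inter> B = {}"
    using rcos_disjoint[OF K] unfolding pairwise_def disjnt_def by blast
  have "(\<Sum>g\<in>carrier G. f g) = (\<Sum>g\<in>\<Union>(rcosets K). f g)" using rcosets_part_G[OF K] by simp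
  also have "\<dots> = (\<Sum>C\<in>rcosets K. \<Sum>g\<in>C. f g)" using sum.Union_disjoint[OF fins disj] by simp
  also have "\<dots> = (\<Sum>C\<in>rcosets K. of_nat (card K) * f (coset_rep C))"
  proof (rule sum.cong[OF refl])
    fix C assume C: "C \<in> rcosets K"
    have "(\<Sum>g\<in>C. f g) = (\<Sum>g\<in>C. f (coset_rep C))"
    proof (rule sum.cong[OF refl])
      fix g assume "g \<in> C"
      then obtain k where "k \<in> K" "g = k \<otimes> coset_rep C"
        using coset_rep_rcosets[OF K C] unfolding r_coset_def by blast
      then show "f g = f (coset_rep C)" using invariant coset_rep_rcosets[OF K C] by simp
    qed
    then show "(\<Sum>g\<in>C. f g) = of_nat (card K) * f (coset_rep C)"
      using card_rcosets_equal[OF C KG] by simp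
  qed
  finally show ?thesis by (simp add: sum_distrib_left)
qed

lemma burnside_eq_iff_class_sums:
  assumes "finite (carrier G)"
  shows "burnside_eq G c d \<longleftrightarrow> (\<forall>H. subgroup H G \<longrightarrow>
     (\<Sum>L | conjugate_subgroups G L H. c L) = (\<Sum>L | conjugate_subgroups G L H. d L))"
proof -
  have "(\<Sum>L\<in>{L. f L \<noteq> 0 \<and> conjugate_subgroups G L H}. f L) = (\<Sum>L | conjugate_subgroups G L H. f L)"
    for f :: "'a set \<Rightarrow> int" and H
    by (rule sum.mono_neutral_left) (auto simp: finite_conjugate_subgroups[OF assms])
  then show ?thesis unfolding burnside_eq_def by simp
qed

lemma burnside_eq_add:
  assumes "finite (carrier G)" and "burnside_eq G a b"
  shows "burnside_eq G (\<lambda>H. a H + e H) (\<lambda>H. b H + e H)"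
  using assms(2) unfolding burnside_eq_iff_class_sums[OF assms(1)] by (simp add: sum.distrib)

lemma burnside_eq_transversal_conj_sum:
  assumes fin: "finite (carrier G)" and K: "subgroup K G"
  shows "burnside_eq G (\<lambda>H. int (card (rcosets K)) * c H) (transversal_conj_sum G K c)"
  unfolding burnside_eq_iff_class_sums[OF fin]
proof (intro allI impI)
  fix H assume H: "subgroup H G"
  let ?Cl = "{L. conjugate_subgroups G L H}"
  have ClG: "L \<subseteq> carrier G" if "L \<in> ?Cl" for L
    using that conj_sub_subset subgroup.subset[OF H] unfolding conjugate_subgroups_def by blast
  have "(\<Sum>L\<in>?Cl. transversal_conj_sum G K c L)
      = (\<Sum>L\<in>?Cl. \<Sum>C\<in>rcosets K. c (conj_sub G (inv (coset_rep C)) L))"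
    using ClG by (intro sum.cong refl) (simp add: transversal_conj_sum_def)
  also have "\<dots> = (\<Sum>C\<in>rcosets K. \<Sum>L\<in>?Cl. c (conj_sub G (inv (coset_rep C)) L))"
    by (rule sum.swap)
  also have "\<dots> = (\<Sum>C\<in>rcosets K. \<Sum>L\<in>?Cl. c L)"
  proof (rule sum.cong[OF refl])
    fix C assume "C \<in> rcosets K"
    then have "inv (coset_rep C) \<in> carrier G" using coset_rep_rcosets(2)[OF K] by blast
    then show "(\<Sum>L\<in>?Cl. c (conj_sub G (inv (coset_rep C)) L)) = (\<Sum>L\<in>?Cl. c L)"
      using sum.reindex_bij_betw[OF bij_betw_conj_sub_conjugates[OF H]] by blast
  qed
  finally show "(\<Sum>L\<in>?Cl. int (card (rcosets K)) * c L) = (\<Sum>L\<in>?Cl. transversal_conj_sum G K c L)"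
    by (simp add: sum_distrib_left)
qed

lemma transversal_conj_sum_support:
  assumes D: "D \<lhd> G" and K: "subgroup K G"
    and c: "\<And>H. c H \<noteq> 0 \<Longrightarrow> subgroup H G \<and> H \<subseteq> D"
    and ne: "transversal_conj_sum G K c H \<noteq> 0"
  shows "subgroup H G \<and> H \<subseteq> D"
proof -
  from ne have HG: "H \<subseteq> carrier G"
    and "(\<Sum>C\<in>rcosets K. c (conj_sub G (inv (coset_rep C)) H)) \<noteq> 0"
    unfolding transversal_conj_sum_def by (auto split: if_splits)
  then obtain C where C: "C \<in> rcosets K" "c (conj_sub G (inv (coset_rep C)) H) \<noteq> 0"
    by (meson sum.neutral)
  define r where "r = coset_rep C"
  have r: "r \<in> carrier G" using coset_rep_rcosets[OF K C(1)] r_def by blast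
  have L: "subgroup (conj_sub G (inv r) H) G" "conj_sub G (inv r) H \<subseteq> D"
    using c C(2) r_def by blast+
  have "H = conj_sub G r (conj_sub G (inv r) H)" using conj_sub_inv_cancel r HG by simp
  then show ?thesis using subgroup_conj_sub[OF L(1) r] conj_sub_normal_subset[OF D r L(2)] by simp
qed

lemma burnside_elem_transversal_conj_sum:
  assumes fin: "finite (carrier G)" and D: "D \<lhd> G" and K: "subgroup K G"
    and c: "\<And>H. c H \<noteq> 0 \<Longrightarrow> subgroup H G \<and> H \<subseteq> D"
  shows "burnside_elem (G\<lparr>carrier := D\<rparr>) (transversal_conj_sum G K c)"
proof -
  let ?c' = "transversal_conj_sum G K c"
  have c'_supp: "subgroup H G \<and> H \<subseteq> D" if "?c' H \<noteq> 0" for H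
    using transversal_conj_sum_support[OF D K c that] .
  then have "{H. ?c' H \<noteq> 0} \<subseteq> Pow (carrier G)" using subgroup.subset by blast
  then have "finite {H. ?c' H \<noteq> 0}" using fin finite_subset by blast
  then show ?thesis
    unfolding burnside_elem_def using c'_supp subgroup_incl[OF _ normal_imp_subgroup[OF D]] by blast
qed

lemma fixed_point_sum_transversal_conj_sum:
  assumes fin: "finite (carrier G)" and D: "D \<lhd> G" and K: "subgroup K G" and d: "d \<in> carrier G"
  shows "fixed_point_sum G D (transversal_conj_sum G K c) d
       = (\<Sum>C\<in>rcosets K. fixed_point_sum G D c (inv (coset_rep C) \<otimes> d \<otimes> coset_rep C))"
proof -
  let ?P = "Pow (carrier G)"
  let ?term = "\<lambda>r H. real_of_int (c (conj_sub G (inv r) H)) / real (card H) * real (conj_count G D d H)"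
  have "fixed_point_sum G D (transversal_conj_sum G K c) d
      = (\<Sum>H\<in>?P. \<Sum>C\<in>rcosets K. ?term (coset_rep C) H)"
    unfolding fixed_point_sum_def transversal_conj_sum_def
    by (intro sum.cong refl) (simp add: sum_divide_distrib sum_distrib_right)
  also have "\<dots> = (\<Sum>C\<in>rcosets K. \<Sum>H\<in>?P. ?term (coset_rep C) H)"
    by (rule sum.swap)
  also have "\<dots> = (\<Sum>C\<in>rcosets K. fixed_point_sum G D c (inv (coset_rep C) \<otimes> d \<otimes> coset_rep C))"
  proof (rule sum.cong[OF refl])
    fix C assume "C \<in> rcosets K"
    then have r: "coset_rep C \<in> carrier G" using coset_rep_rcosets[OF K] by blast
    have "(\<Sum>H\<in>?P. ?term (coset_rep C) H) = (\<Sum>L\<in>?P. ?term (coset_rep C) (conj_sub G (coset_rep C) L))"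
      using sum.reindex_bij_betw[OF bij_betw_conj_sub_Pow[OF r], of "?term (coset_rep C)"] by simp
    also have "\<dots> = fixed_point_sum G D c (inv (coset_rep C) \<otimes> d \<otimes> coset_rep C)"
      unfolding fixed_point_sum_def
      by (intro sum.cong refl)
         (simp add: r conj_sub_inv_cancel card_conj_sub conj_count_conj_sub_normal[OF fin D r d])
    finally show "(\<Sum>H\<in>?P. ?term (coset_rep C) H)
        = fixed_point_sum G D c (inv (coset_rep C) \<otimes> d \<otimes> coset_rep C)" .
  qed
  finally show ?thesis .
qed

lemma conj_sub_subgroup:
  "subgroup D G \<Longrightarrow> g \<in> D \<Longrightarrow> conj_sub (G\<lparr>carrier := D\<rparr>) g L = conj_sub G g L"
  unfolding conj_sub_def by simp

text \<open>This is where the hypothesis on the action of \<open>K\<close> enters: \<open>k\<close> moves each subgroup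
  \<open>L \<le> D\<close> in the support to a \<open>D\<close>-conjugate, which has the same fixed-point counts in \<open>D\<close>.\<close>
lemma fixed_point_sum_conj_invariant:
  assumes fin: "finite (carrier G)" and D: "D \<lhd> G" and k: "k \<in> carrier G"
    and acts_trivially: "\<And>H. subgroup H (G\<lparr>carrier := D\<rparr>) \<Longrightarrow>
        conjugate_subgroups (G\<lparr>carrier := D\<rparr>) (conj_sub G k H) H"
    and c: "\<And>H. c H \<noteq> 0 \<Longrightarrow> subgroup H G \<and> H \<subseteq> D"
    and e: "e \<in> D"
  shows "fixed_point_sum G D c (inv k \<otimes> e \<otimes> k) = fixed_point_sum G D c e"
  unfolding fixed_point_sum_def
proof (rule sum.cong[OF refl])
  fix L assume L: "L \<in> Pow (carrier G)"
  have Dsub: "subgroup D G" using D normal_imp_subgroup by blast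
  have eG: "e \<in> carrier G" using e Dsub subgroup.subset by blast
  show "real_of_int (c L) / real (card L) * real (conj_count G D (inv k \<otimes> e \<otimes> k) L)
      = real_of_int (c L) / real (card L) * real (conj_count G D e L)"
  proof (cases "c L = 0")
    case False
    then have "subgroup L (G\<lparr>carrier := D\<rparr>)" using c subgroup_incl[OF _ Dsub] by blast
    then obtain d where d: "d \<in> D" "conj_sub G k L = conj_sub G d L"
      using acts_trivially conj_sub_subgroup[OF Dsub] unfolding conjugate_subgroups_def by fastforce
    have "conj_count G D (inv k \<otimes> e \<otimes> k) L = conj_count G D e (conj_sub G k L)"
      using conj_count_conj_sub_normal[OF fin D k eG] L by simp
    also have "\<dots> = conj_count G D e L"
      using d conj_count_conj_sub_inner[OF fin Dsub d(1) eG] L by simp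
    finally show ?thesis by simp
  qed simp
qed

lemma is_relation_transversal_conj_sum:
  assumes fin: "finite (carrier G)" and D: "D \<lhd> G" and K: "K \<lhd> G"
    and acts_trivially: "\<And>k H. k \<in> K \<Longrightarrow> subgroup H (G\<lparr>carrier := D\<rparr>) \<Longrightarrow>
        conjugate_subgroups (G\<lparr>carrier := D\<rparr>) (conj_sub G k H) H"
    and rel: "is_relation G c" and in_D: "\<And>H. c H \<noteq> 0 \<Longrightarrow> H \<subseteq> D"
  shows "is_relation (G\<lparr>carrier := D\<rparr>) (transversal_conj_sum G K c)"
proof -
  have Dsub: "subgroup D G" and Ksub: "subgroup K G" using D K normal_imp_subgroup by blast+
  have DG: "D \<subseteq> carrier G" and KG: "K \<subseteq> carrier G" using Dsub Ksub subgroup.subset by blast+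
  have be: "burnside_elem G c" using rel unfolding is_relation_def by blast
  have c: "subgroup H G \<and> H \<subseteq> D" if "c H \<noteq> 0" for H
    using be in_D that unfolding burnside_elem_def by blast
  let ?c' = "transversal_conj_sum G K c"
  have be': "burnside_elem (G\<lparr>carrier := D\<rparr>) ?c'"
    using burnside_elem_transversal_conj_sum[OF fin D Ksub c] .
  show ?thesis
    unfolding is_relation_subgroup_iff[OF fin Dsub be']
  proof
    fix d assume d: "d \<in> D"
    then have dG: "d \<in> carrier G" using DG by blast
    define f where "f g = fixed_point_sum G D c (inv g \<otimes> d \<otimes> g)" for g
    have "f (k \<otimes> g) = f g" if k: "k \<in> K" and g: "g \<in> carrier G" for k g
    proof -
      define k' where "k' = inv g \<otimes> k \<otimes> g"
      have k': "k' \<in> K" unfolding k'_def using normal.inv_op_closed1[OF K g k] .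
      then have k'G: "k' \<in> carrier G" using KG by blast
      have e: "inv g \<otimes> d \<otimes> g \<in> D" using normal.inv_op_closed1[OF D g d] .
      have "inv (k \<otimes> g) \<otimes> d \<otimes> (k \<otimes> g) = inv k' \<otimes> (inv g \<otimes> d \<otimes> g) \<otimes> k'"
        unfolding k'_def using k KG g dG by (simp add: inv_mult_group m_assoc subsetD)
      then show ?thesis
        unfolding f_def using fixed_point_sum_conj_invariant[OF fin D k'G acts_trivially[OF k'] c e] by simp
    qed
    then have "(\<Sum>g\<in>carrier G. f g) = real (card K) * (\<Sum>C\<in>rcosets K. f (coset_rep C))"
      by (rule sum_carrier_rcosets[OF fin Ksub])
    moreover have "(\<Sum>g\<in>carrier G. f g) = 0"
      using sum_fixed_point_sum_conjugates[OF fin Dsub dG] is_relation_iff[OF fin be] rel dG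
      unfolding f_def by simp
    moreover have "card K > 0" using subgroup.finite_imp_card_positive[OF Ksub fin] .
    ultimately show "fixed_point_sum G D ?c' d = 0"
      using fixed_point_sum_transversal_conj_sum[OF fin D Ksub dG] unfolding f_def by simp
  qed
qed

end

lemma relation_in_normal_subgroup_multiple_induced:
  fixes G (structure)
  assumes "group G" and fin: "finite (carrier G)" and D: "D \<lhd> G"
    and factors: "conj_action_factors G D n"
    and rel: "is_relation G c" and in_D: "\<And>H. c H \<noteq> 0 \<Longrightarrow> H \<subseteq> D"
  shows "\<exists>c'. is_relation (G\<lparr>carrier := D\<rparr>) c' \<and> burnside_eq G (\<lambda>H. int n * c H) c'"
proof -
  interpret group G by fact
  obtain K where K: "K \<lhd> G" and n: "order (G Mod K) = n"
    and acts_trivially: "\<And>k H. k \<in> K \<Longrightarrow> subgroup H (G\<lparr>carrier := D\<rparr>) \<Longrightarrow>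
        conjugate_subgroups (G\<lparr>carrier := D\<rparr>) (conj_sub G k H) H"
    using factors unfolding conj_action_factors_def by blast
  have "n = card (rcosets K)" using n unfolding order_def FactGroup_def by simp
  then show ?thesis
    using is_relation_transversal_conj_sum[OF fin D K acts_trivially rel in_D]
      burnside_eq_transversal_conj_sum[OF fin normal_imp_subgroup[OF K]] by blast
qed
section \<open>Relations modulo a normal subgroup\<close>

definition mult_normal_sum :: "('a, 'b) monoid_scheme \<Rightarrow> 'a set \<Rightarrow> ('a set \<Rightarrow> int) \<Rightarrow> 'a set \<Rightarrow> int" where
  "mult_normal_sum G N c U = (\<Sum>H\<in>{H. c H \<noteq> 0 \<and> H <#>\<^bsub>G\<^esub> N = U}. c H)"

context group begin

lemma subgroup_set_mult_normal:
  assumes N: "N \<lhd> G" and H: "subgroup H G"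
  shows "subgroup (H <#> N) G"
proof -
  have "subgroup (N <#> H) G"
    using second_isomorphism_grp.normal_set_mult_subgroup[of N G H] N H
    unfolding second_isomorphism_grp_def second_isomorphism_grp_axioms_def by blast
  then show ?thesis using commut_normal[OF H N] by simp
qed

lemma normal_subset_set_mult:
  assumes N: "N \<lhd> G" and H: "subgroup H G"
  shows "N \<subseteq> H <#> N"
proof
  fix n assume n: "n \<in> N"
  then have "n = \<one> \<otimes> n" using N normal_imp_subgroup subgroup.mem_carrier by (metis l_one)
  then show "n \<in> H <#> N" unfolding set_mult_def using n subgroup.one_closed[OF H] by blast
qed

lemma set_mult_normal_absorb:
  assumes N: "N \<lhd> G" and H: "subgroup H G" and NH: "N \<subseteq> H"
  shows "H <#> N = H"
proof
  show "H <#> N \<subseteq> H" using mono_set_mult[of H H N H G] NH subgroup_mult_id[OF H] by simp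
  show "H \<subseteq> H <#> N"
  proof
    fix h assume h: "h \<in> H"
    have "h = h \<otimes> \<one>" using h H subgroup.mem_carrier by (metis r_one)
    then show "h \<in> H <#> N" unfolding set_mult_def using h subgroup.one_closed[OF normal_imp_subgroup[OF N]] by blast
  qed
qed

lemma card_translates_into_subgroup:
  assumes N: "N \<lhd> G" and H: "subgroup H G" and z: "z \<in> carrier G"
  shows "card {m\<in>N. z \<otimes> m \<in> H} = (if z \<in> H <#> N then card (H \<inter> N) else 0)"
proof (cases "z \<in> H <#> N")
  case True
  have Ns: "subgroup N G" using N normal_imp_subgroup by blast
  obtain h n0 where h: "h \<in> H" and n0: "n0 \<in> N" and z_eq: "z = h \<otimes> n0"
    using True unfolding set_mult_def by blast
  have hG: "h \<in> carrier G" and n0G: "n0 \<in> carrier G"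
    using subgroup.mem_carrier[OF H h] subgroup.mem_carrier[OF Ns n0] .
  have "bij_betw (\<lambda>m. n0 \<otimes> m) {m\<in>N. z \<otimes> m \<in> H} (H \<inter> N)"
  proof (rule bij_betwI[where g="\<lambda>a. inv n0 \<otimes> a"])
    show "(\<lambda>m. n0 \<otimes> m) \<in> {m\<in>N. z \<otimes> m \<in> H} \<rightarrow> H \<inter> N"
    proof
      fix m assume m: "m \<in> {m\<in>N. z \<otimes> m \<in> H}"
      then have "n0 \<otimes> m = inv h \<otimes> (z \<otimes> m)"
        using hG n0G subgroup.mem_carrier[OF Ns] z_eq by (simp add: m_assoc)
      moreover have "inv h \<otimes> (z \<otimes> m) \<in> H"
        using m h subgroup.m_closed[OF H] subgroup.m_inv_closed[OF H] by blast
      moreover have "n0 \<otimes> m \<in> N" using m n0 subgroup.m_closed[OF Ns] by blast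
      ultimately show "n0 \<otimes> m \<in> H \<inter> N" by simp
    qed
    show "(\<lambda>a. inv n0 \<otimes> a) \<in> H \<inter> N \<rightarrow> {m\<in>N. z \<otimes> m \<in> H}"
    proof
      fix a assume a: "a \<in> H \<inter> N"
      then have "z \<otimes> (inv n0 \<otimes> a) = h \<otimes> a"
        using hG n0G subgroup.mem_carrier[OF H] z_eq by (simp add: m_assoc)
      moreover have "h \<otimes> a \<in> H" using a h subgroup.m_closed[OF H] by blast
      moreover have "inv n0 \<otimes> a \<in> N"
        using a n0 subgroup.m_closed[OF Ns] subgroup.m_inv_closed[OF Ns] by blast
      ultimately show "inv n0 \<otimes> a \<in> {m\<in>N. z \<otimes> m \<in> H}" by simp
    qed
  qed (use n0G subgroup.mem_carrier[OF Ns] in auto)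
  then show ?thesis using True by (simp add: bij_betw_same_card)
next
  case False
  have Ns: "subgroup N G" using N normal_imp_subgroup by blast
  have "z \<otimes> m \<notin> H" if m: "m \<in> N" for m
  proof
    assume "z \<otimes> m \<in> H"
    then have "(z \<otimes> m) \<otimes> inv m \<in> H <#> N"
      unfolding set_mult_def using subgroup.m_inv_closed[OF Ns m] by blast
    moreover have "(z \<otimes> m) \<otimes> inv m = z" using z subgroup.mem_carrier[OF Ns m] by (simp add: m_assoc)
    ultimately show False using False by simp
  qed
  then have empty: "{m\<in>N. z \<otimes> m \<in> H} = {}" by blast
  show ?thesis unfolding empty using False by simp
qed

lemma card_set_mult_normal:
  assumes fin: "finite (carrier G)" and N: "N \<lhd> G" and H: "subgroup H G"
  shows "card (H <#> N) * card (H \<inter> N) = card H * card N"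
proof -
  have Ns: "subgroup N G" using N normal_imp_subgroup by blast
  have NG: "N \<subseteq> carrier G" and HG: "H \<subseteq> carrier G" using Ns H subgroup.subset by blast+
  have finN: "finite N" using fin NG finite_subset by blast
  have HNG: "H <#> N \<subseteq> carrier G" using setmult_subset_G HG NG by blast
  have "(\<Sum>z\<in>carrier G. card {m\<in>N. z \<otimes> m \<in> H}) = (\<Sum>z\<in>carrier G. if z \<in> H <#> N then card (H \<inter> N) else 0)"
    using card_translates_into_subgroup[OF N H] by simp
  also have "\<dots> = card (H <#> N) * card (H \<inter> N)"
    using sum.inter_restrict[OF fin, of "\<lambda>_. card (H \<inter> N)" "H <#> N"] HNG
    by (simp add: Int_absorb1)
  finally have A: "(\<Sum>z\<in>carrier G. card {m\<in>N. z \<otimes> m \<in> H}) = card (H <#> N) * card (H \<inter> N)" .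
  have "(\<Sum>z\<in>carrier G. card {m\<in>N. z \<otimes> m \<in> H}) = (\<Sum>z\<in>carrier G. \<Sum>m\<in>N. if z \<otimes> m \<in> H then 1 else 0)"
    using card_filter_eq_sum[OF finN] by simp
  also have "\<dots> = (\<Sum>m\<in>N. \<Sum>z\<in>carrier G. if z \<otimes> m \<in> H then 1 else 0)" by (rule sum.swap)
  also have "\<dots> = (\<Sum>m\<in>N. \<Sum>z\<in>carrier G. if z \<in> H then 1 else 0)"
  proof (rule sum.cong[OF refl])
    fix m assume "m \<in> N"
    then have mG: "m \<in> carrier G" using NG by blast
    have "bij_betw (\<lambda>z. z \<otimes> m) (carrier G) (carrier G)"
      by (rule bij_betwI[where g="\<lambda>z. z \<otimes> inv m"]) (auto simp: mG m_assoc)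
    then show "(\<Sum>z\<in>carrier G. if z \<otimes> m \<in> H then 1 else 0) = (\<Sum>z\<in>carrier G. if z \<in> H then 1 else (0::nat))"
      by (rule sum.reindex_bij_betw)
  qed
  also have "\<dots> = card N * card H"
  proof -
    have "{z \<in> carrier G. z \<in> H} = H" using HG by blast
    then show ?thesis using card_filter_eq_sum[OF fin, of "\<lambda>z. z \<in> H"] by simp
  qed
  finally show ?thesis using A by simp
qed

lemma conj_count_set_mult_normal:
  assumes fin: "finite (carrier G)" and N: "N \<lhd> G" and H: "subgroup H G" and g: "g \<in> carrier G"
  shows "card (H \<inter> N) * conj_count G (carrier G) g (H <#> N) = (\<Sum>m\<in>N. conj_count G (carrier G) (g \<otimes> m) H)"
proof -
  have Ns: "subgroup N G" using N normal_imp_subgroup by blast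
  have NG: "N \<subseteq> carrier G" using Ns subgroup.subset by blast
  have finN: "finite N" using fin NG finite_subset by blast
  have "(\<Sum>m\<in>N. conj_count G (carrier G) (g \<otimes> m) H) = (\<Sum>m\<in>N. \<Sum>y\<in>carrier G. if inv y \<otimes> (g \<otimes> m) \<otimes> y \<in> H then 1 else 0)"
    unfolding conj_count_eq_sum[OF fin] ..
  also have "\<dots> = (\<Sum>y\<in>carrier G. \<Sum>m\<in>N. if (inv y \<otimes> g \<otimes> y) \<otimes> (inv y \<otimes> m \<otimes> y) \<in> H then 1 else 0)"
    using g NG by (subst sum.swap) (intro sum.cong refl, auto simp: m_assoc subsetD)
  also have "\<dots> = (\<Sum>y\<in>carrier G. \<Sum>m\<in>N. if (inv y \<otimes> g \<otimes> y) \<otimes> m \<in> H then 1 else 0)"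
  proof (rule sum.cong[OF refl])
    fix y assume y: "y \<in> carrier G"
    have bij: "bij_betw (\<lambda>m. inv y \<otimes> m \<otimes> y) N N"
    proof (rule bij_betwI[where g="\<lambda>m. y \<otimes> m \<otimes> inv y"])
      show "(\<lambda>m. inv y \<otimes> m \<otimes> y) \<in> N \<rightarrow> N" using N y normal.inv_op_closed1 by fastforce
      show "(\<lambda>m. y \<otimes> m \<otimes> inv y) \<in> N \<rightarrow> N" using N y normal.inv_op_closed2 by fastforce
    qed (use y NG in \<open>auto simp: m_assoc subsetD\<close>)
    show "(\<Sum>m\<in>N. if (inv y \<otimes> g \<otimes> y) \<otimes> (inv y \<otimes> m \<otimes> y) \<in> H then 1 else 0)
        = (\<Sum>m\<in>N. if (inv y \<otimes> g \<otimes> y) \<otimes> m \<in> H then 1 else (0::nat))"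
      by (rule sum.reindex_bij_betw[OF bij])
  qed
  also have "\<dots> = (\<Sum>y\<in>carrier G. if inv y \<otimes> g \<otimes> y \<in> H <#> N then card (H \<inter> N) else 0)"
  proof (rule sum.cong[OF refl])
    fix y assume y: "y \<in> carrier G"
    have z: "inv y \<otimes> g \<otimes> y \<in> carrier G" using y g by simp
    show "(\<Sum>m\<in>N. if (inv y \<otimes> g \<otimes> y) \<otimes> m \<in> H then 1 else 0) = (if inv y \<otimes> g \<otimes> y \<in> H <#> N then card (H \<inter> N) else 0)"
      using card_translates_into_subgroup[OF N H z] card_filter_eq_sum[OF finN, of "\<lambda>m. (inv y \<otimes> g \<otimes> y) \<otimes> m \<in> H"] by simp
  qed
  also have "\<dots> = card (H \<inter> N) * conj_count G (carrier G) g (H <#> N)"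
  proof -
    have "(\<Sum>y\<in>carrier G. if inv y \<otimes> g \<otimes> y \<in> H <#> N then card (H \<inter> N) else 0)
        = (\<Sum>y\<in>carrier G. card (H \<inter> N) * (if inv y \<otimes> g \<otimes> y \<in> H <#> N then 1 else 0))"
      by (intro sum.cong refl) simp
    also have "\<dots> = card (H \<inter> N) * (\<Sum>y\<in>carrier G. if inv y \<otimes> g \<otimes> y \<in> H <#> N then 1 else 0)"
      by (simp add: sum_distrib_left)
    finally show ?thesis unfolding conj_count_eq_sum[OF fin] .
  qed
  finally show ?thesis by simp
qed


lemma rcos_mem_image_iff:
  assumes N: "N \<lhd> G" and U: "subgroup U G" and NU: "N \<subseteq> U" and z: "z \<in> carrier G"
  shows "N #> z \<in> (\<lambda>u. N #> u) ` U \<longleftrightarrow> z \<in> U"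
proof
  assume "N #> z \<in> (\<lambda>u. N #> u) ` U"
  then obtain u where u: "u \<in> U" "N #> z = N #> u" by blast
  have Ns: "subgroup N G" using N normal_imp_subgroup by blast
  have "z \<in> N #> u" using repr_independenceD[OF Ns z u(2)[symmetric]] .
  then obtain n where n: "n \<in> N" "z = n \<otimes> u" unfolding r_coset_def by blast
  have "n \<otimes> u \<in> U" using subgroup.m_closed[OF U] n NU u by blast
  then show "z \<in> U" using n by simp
qed blast

lemma FactGroup_conj_rcos:
  assumes N: "N \<lhd> G" and y: "y \<in> carrier G" and g: "g \<in> carrier G"
  shows "inv\<^bsub>G Mod N\<^esub> (N #> y) \<otimes>\<^bsub>G Mod N\<^esub> (N #> g) \<otimes>\<^bsub>G Mod N\<^esub> (N #> y) = N #> (inv y \<otimes> g \<otimes> y)"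
proof -
  interpret NN: normal N G by fact
  have "N #> y \<in> carrier (G Mod N)" using y unfolding FactGroup_def RCOSETS_def by auto
  then have "inv\<^bsub>G Mod N\<^esub> (N #> y) = N #> inv y" using NN.inv_FactGroup NN.rcos_inv y by simp
  then show ?thesis using y g by (simp add: NN.rcos_sum)
qed

lemma sum_carrier_rcos:
  fixes F :: "'a set \<Rightarrow> 'z::comm_semiring_1"
  assumes fin: "finite (carrier G)" and N: "N \<lhd> G"
  shows "(\<Sum>y\<in>carrier G. F (N #> y)) = of_nat (card N) * (\<Sum>C\<in>rcosets N. F C)"
proof -
  have Ns: "subgroup N G" using N normal_imp_subgroup by blast
  have NG: "N \<subseteq> carrier G" using Ns subgroup.subset by blast
  have "(\<Sum>y\<in>carrier G. F (N #> y)) = of_nat (card N) * (\<Sum>C\<in>rcosets N. F (N #> coset_rep C))"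
  proof (rule sum_carrier_rcosets[OF fin Ns])
    fix k g assume k: "k \<in> N" and g: "g \<in> carrier G"
    have kG: "k \<in> carrier G" by (rule subgroup.mem_carrier[OF Ns k])
    have "N #> (k \<otimes> g) = (N #> k) #> g" using coset_mult_assoc[OF NG kG g] by simp
    also have "N #> k = N" using subgroup.rcos_const[OF Ns is_group k] .
    finally show "F (N #> (k \<otimes> g)) = F (N #> g)" by simp
  qed
  also have "(\<Sum>C\<in>rcosets N. F (N #> coset_rep C)) = (\<Sum>C\<in>rcosets N. F C)"
    using coset_rep_rcosets(3)[OF Ns] by (intro sum.cong refl) (metis)
  finally show ?thesis .
qed

lemma subgroup_rcos_image:
  assumes N: "N \<lhd> G" and U: "subgroup U G"
  shows "subgroup ((\<lambda>u. N #> u) ` U) (G Mod N)"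
proof -
  interpret NN: normal N G by fact
  interpret Q: group "G Mod N" by (rule NN.factorgroup_is_group)
  have UG: "U \<subseteq> carrier G" using U subgroup.subset by blast
  show ?thesis
  proof (rule Q.subgroupI)
    show "(\<lambda>u. N #> u) ` U \<subseteq> carrier (G Mod N)" using UG unfolding FactGroup_def RCOSETS_def by auto
    show "(\<lambda>u. N #> u) ` U \<noteq> {}" using subgroup.one_closed[OF U] by blast
  next
    fix A assume "A \<in> (\<lambda>u. N #> u) ` U"
    then obtain u where u: "u \<in> U" "A = N #> u" by blast
    have uG: "u \<in> carrier G" using u UG by blast
    have "A \<in> carrier (G Mod N)" using u uG unfolding FactGroup_def RCOSETS_def by auto
    then have "inv\<^bsub>G Mod N\<^esub> A = N #> inv u" using NN.inv_FactGroup NN.rcos_inv uG u by simp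
    then show "inv\<^bsub>G Mod N\<^esub> A \<in> (\<lambda>u. N #> u) ` U" using subgroup.m_inv_closed[OF U u(1)] by simp
  next
    fix A B assume "A \<in> (\<lambda>u. N #> u) ` U" "B \<in> (\<lambda>u. N #> u) ` U"
    then obtain a b where ab: "a \<in> U" "A = N #> a" "b \<in> U" "B = N #> b" by blast
    have "A \<otimes>\<^bsub>G Mod N\<^esub> B = N #> (a \<otimes> b)" using ab UG NN.rcos_sum by auto
    then show "A \<otimes>\<^bsub>G Mod N\<^esub> B \<in> (\<lambda>u. N #> u) ` U" using subgroup.m_closed[OF U ab(1,3)] by simp
  qed
qed

lemma card_subgroup_rcos_image:
  assumes fin: "finite (carrier G)" and N: "N \<lhd> G" and U: "subgroup U G" and NU: "N \<subseteq> U"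
  shows "card U = card N * card ((\<lambda>u. N #> u) ` U)"
proof -
  have Ns: "subgroup N G" using N normal_imp_subgroup by blast
  have UG: "U \<subseteq> carrier G" using U subgroup.subset by blast
  have NG: "N \<subseteq> carrier G" using Ns subgroup.subset by blast
  let ?I = "(\<lambda>u. N #> u) ` U"
  have sub: "?I \<subseteq> rcosets N" using UG unfolding RCOSETS_def by auto
  have un: "\<Union>?I = U"
  proof
    show "\<Union>?I \<subseteq> U"
    proof
      fix x assume "x \<in> \<Union>?I"
      then obtain u where u: "u \<in> U" "x \<in> N #> u" by blast
      then obtain n where n: "n \<in> N" "x = n \<otimes> u" unfolding r_coset_def by blast
      have "n \<otimes> u \<in> U" using subgroup.m_closed[OF U] NU u(1) n(1) by blast
      then show "x \<in> U" by (simp only: n(2))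
    qed
    show "U \<subseteq> \<Union>?I" using rcos_self[OF _ Ns] UG by blast
  qed
  have finU: "finite U" by (rule finite_subset[OF UG fin])
  have finI: "finite ?I" by (rule finite_imageI[OF finU])
  have c1: "\<And>c. c \<in> ?I \<Longrightarrow> card c = card N" using card_rcosets_equal[OF _ NG] sub by (metis subsetD)
  have c2: "\<And>c1 c2. c1 \<in> ?I \<Longrightarrow> c2 \<in> ?I \<Longrightarrow> c1 \<noteq> c2 \<Longrightarrow> c1 \<inter> c2 = {}"
    using rcos_disjoint[OF Ns] sub unfolding pairwise_def disjnt_def by blast
  have fU: "finite (\<Union>?I)" by (simp only: un finU)
  show ?thesis using card_partition[OF finI fU c1 c2] un by simp
qed

lemma perm_char_FactGroup:
  assumes fin: "finite (carrier G)" and N: "N \<lhd> G" and U: "subgroup U G" and NU: "N \<subseteq> U"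
    and g: "g \<in> carrier G"
  shows "perm_char (G Mod N) ((\<lambda>u. N #> u) ` U) (N #> g) = perm_char G U g"
proof -
  interpret NN: normal N G by fact
  have Qg: "group (G Mod N)" by (rule NN.factorgroup_is_group)
  have Ns: "subgroup N G" using N normal_imp_subgroup by blast
  let ?I = "(\<lambda>u. N #> u) ` U"
  have "carrier (G Mod N) \<subseteq> Pow (carrier G)" using rcosets_subset_PowG[OF Ns] by (simp add: FactGroup_def)
  then have finQ: "finite (carrier (G Mod N))" using fin by (meson finite_Pow_iff finite_subset)
  have Xc: "N #> g \<in> carrier (G Mod N)" using g unfolding FactGroup_def RCOSETS_def by auto
  have A: "card ?I * perm_char (G Mod N) ?I (N #> g) = conj_count (G Mod N) (carrier (G Mod N)) (N #> g) ?I"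
    using group.card_mult_perm_char[OF Qg finQ subgroup_rcos_image[OF N U] Xc] .
  have B: "card U * perm_char G U g = conj_count G (carrier G) g U"
    using card_mult_perm_char[OF fin U g] .
  define F where "F C = (if inv\<^bsub>G Mod N\<^esub> C \<otimes>\<^bsub>G Mod N\<^esub> (N #> g) \<otimes>\<^bsub>G Mod N\<^esub> C \<in> ?I then 1 else (0::nat))" for C
  have "conj_count G (carrier G) g U = (\<Sum>y\<in>carrier G. if inv y \<otimes> g \<otimes> y \<in> U then 1 else 0)"
    by (rule conj_count_eq_sum[OF fin])
  also have "\<dots> = (\<Sum>y\<in>carrier G. F (N #> y))"
  proof (intro sum.cong refl)
    fix y assume y: "y \<in> carrier G"
    have "inv y \<otimes> g \<otimes> y \<in> carrier G" using y g by simp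
    then show "(if inv y \<otimes> g \<otimes> y \<in> U then 1 else 0) = F (N #> y)"
      unfolding F_def using FactGroup_conj_rcos[OF N y g] rcos_mem_image_iff[OF N U NU] by simp
  qed
  also have "\<dots> = card N * (\<Sum>C\<in>rcosets N. F C)" using sum_carrier_rcos[OF fin N, of F] by simp
  also have "(\<Sum>C\<in>rcosets N. F C) = conj_count (G Mod N) (carrier (G Mod N)) (N #> g) ?I"
    unfolding conj_count_eq_sum[OF finQ] F_def by (simp add: FactGroup_def)
  finally have C: "conj_count G (carrier G) g U = card N * conj_count (G Mod N) (carrier (G Mod N)) (N #> g) ?I" .
  have D: "card U = card N * card ?I" using card_subgroup_rcos_image[OF fin N U NU] .
  have pos: "card N * card ?I > 0" using D subgroup.finite_imp_card_positive[OF U fin] by simp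
  have "card N * card ?I * perm_char G U g = card N * card ?I * perm_char (G Mod N) ?I (N #> g)"
    using A B C D by (simp add: mult.assoc)
  then show ?thesis using pos by simp
qed

lemma mult_normal_sum_support:
  assumes N: "N \<lhd> G" and c: "\<And>H. c H \<noteq> 0 \<Longrightarrow> subgroup H G"
    and ne: "mult_normal_sum G N c U \<noteq> 0"
  shows "U \<in> (\<lambda>H. H <#> N) ` {H. c H \<noteq> 0}" "subgroup U G" "N \<subseteq> U"
proof -
  have "{H. c H \<noteq> 0 \<and> H <#> N = U} \<noteq> {}"
    using ne unfolding mult_normal_sum_def by (metis sum.empty)
  then obtain H where "c H \<noteq> 0" "U = H <#> N" by blast
  then show "U \<in> (\<lambda>H. H <#> N) ` {H. c H \<noteq> 0}" "subgroup U G" "N \<subseteq> U"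
    using subgroup_set_mult_normal[OF N] normal_subset_set_mult[OF N] c by blast+
qed

lemma mult_normal_sum_eq_outside:
  assumes N: "N \<lhd> G" and D: "subgroup D G" and ND: "N \<subseteq> D"
    and dichotomy: "\<And>H. subgroup H G \<Longrightarrow> N \<subseteq> H \<or> H \<subseteq> D"
    and c: "\<And>H. c H \<noteq> 0 \<Longrightarrow> subgroup H G"
    and U: "subgroup U G" and not_in_D: "\<not> U \<subseteq> D"
  shows "mult_normal_sum G N c U = c U"
proof -
  have NU: "N \<subseteq> U" using dichotomy[OF U] not_in_D by blast
  have "H = U" if H: "c H \<noteq> 0" "H <#> N = U" for H
  proof (cases "N \<subseteq> H")
    case True
    then show ?thesis using set_mult_normal_absorb[OF N c[OF H(1)]] H(2) by simp
  next
    case False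
    then have "H <#> N \<subseteq> D <#> D" using dichotomy[OF c[OF H(1)]] ND mono_set_mult by blast
    then show ?thesis using H(2) subgroup_mult_id[OF D] not_in_D by simp
  qed
  then have "{H. c H \<noteq> 0 \<and> H <#> N = U} = {H. c H \<noteq> 0 \<and> H = U}"
    using set_mult_normal_absorb[OF N U NU] by blast
  also have "\<dots> = (if c U = 0 then {} else {U})" by auto
  finally show ?thesis unfolding mult_normal_sum_def by simp
qed

lemma conj_count_set_mult_normal_ratio:
  assumes fin: "finite (carrier G)" and N: "N \<lhd> G" and H: "subgroup H G" and g: "g \<in> carrier G"
  shows "real (conj_count G (carrier G) g (H <#> N)) / real (card (H <#> N))
       = (\<Sum>m\<in>N. real (conj_count G (carrier G) (g \<otimes> m) H)) / (real (card H) * real (card N))"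
proof -
  have Ns: "subgroup N G" using N normal_imp_subgroup by blast
  have finH: "finite H" using fin subgroup.subset[OF H] finite_subset by blast
  have "\<one> \<in> H \<inter> N" using subgroup.one_closed[OF H] subgroup.one_closed[OF Ns] by blast
  then have pos: "card (H \<inter> N) > 0" using finH by (auto simp: card_gt_0_iff)
  have card_eq: "real (card H) * real (card N) = real (card (H \<inter> N)) * real (card (H <#> N))"
    by (simp only: of_nat_mult[symmetric] card_set_mult_normal[OF fin N H, symmetric] mult.commute)
  have count_eq: "(\<Sum>m\<in>N. real (conj_count G (carrier G) (g \<otimes> m) H))
      = real (card (H \<inter> N)) * real (conj_count G (carrier G) g (H <#> N))"
    by (simp only: of_nat_sum[symmetric] of_nat_mult[symmetric] conj_count_set_mult_normal[OF fin N H g])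
  show ?thesis unfolding card_eq count_eq using pos by simp
qed

lemma fixed_point_sum_mult_normal_sum:
  assumes fin: "finite (carrier G)" and N: "N \<lhd> G" and g: "g \<in> carrier G"
    and c: "\<And>H. c H \<noteq> 0 \<Longrightarrow> subgroup H G" and fin_supp: "finite {H. c H \<noteq> 0}"
  shows "fixed_point_sum G (carrier G) (mult_normal_sum G N c) g
       = (\<Sum>m\<in>N. fixed_point_sum G (carrier G) c (g \<otimes> m)) / real (card N)"
proof -
  let ?P = "Pow (carrier G)" and ?S = "{H. c H \<noteq> 0}"
  let ?cc = "\<lambda>g H. real (conj_count G (carrier G) g H)"
  let ?w = "\<lambda>H. ?cc g (H <#> N) / real (card (H <#> N))"
  have S_P: "?S \<subseteq> ?P" using c subgroup.subset by blast
  have img_P: "(\<lambda>H. H <#> N) ` ?S \<subseteq> ?P"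
    using c subgroup_set_mult_normal[OF N] subgroup.subset by blast
  have "fixed_point_sum G (carrier G) (mult_normal_sum G N c) g
      = (\<Sum>U\<in>?P. \<Sum>H\<in>{H \<in> ?S. H <#> N = U}. real_of_int (c H) * ?w H)"
    unfolding fixed_point_sum_def mult_normal_sum_def
    by (intro sum.cong refl) (auto simp: sum_divide_distrib sum_distrib_right)
  also have "\<dots> = (\<Sum>H\<in>?S. real_of_int (c H) * ?w H)"
    by (rule sum.group[OF fin_supp _ img_P]) (simp add: fin)
  also have "\<dots> = (\<Sum>H\<in>?S. (\<Sum>m\<in>N. real_of_int (c H) / real (card H) * ?cc (g \<otimes> m) H) / real (card N))"
  proof (rule sum.cong[OF refl])
    fix H assume "H \<in> ?S"
    then have "?w H = (\<Sum>m\<in>N. ?cc (g \<otimes> m) H) / (real (card H) * real (card N))"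
      using conj_count_set_mult_normal_ratio[OF fin N _ g] c by blast
    then show "real_of_int (c H) * ?w H
        = (\<Sum>m\<in>N. real_of_int (c H) / real (card H) * ?cc (g \<otimes> m) H) / real (card N)"
      by (simp add: sum_divide_distrib[symmetric] sum_distrib_left[symmetric])
  qed
  also have "\<dots> = (\<Sum>H\<in>?S. \<Sum>m\<in>N. real_of_int (c H) / real (card H) * ?cc (g \<otimes> m) H) / real (card N)"
    by (rule sum_divide_distrib[symmetric])
  also have "\<dots> = (\<Sum>m\<in>N. \<Sum>H\<in>?S. real_of_int (c H) / real (card H) * ?cc (g \<otimes> m) H) / real (card N)"
    by (subst sum.swap) simp
  also have "\<dots> = (\<Sum>m\<in>N. fixed_point_sum G (carrier G) c (g \<otimes> m)) / real (card N)"
    unfolding fixed_point_sum_def using fin S_P by (subst sum.mono_neutral_left) auto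
  finally show ?thesis .
qed

lemma is_relation_mult_normal_sum:
  assumes fin: "finite (carrier G)" and N: "N \<lhd> G" and rel: "is_relation G c"
  shows "is_relation G (mult_normal_sum G N c)"
proof -
  have be: "burnside_elem G c" using rel unfolding is_relation_def by blast
  have c: "\<And>H. c H \<noteq> 0 \<Longrightarrow> subgroup H G" using be unfolding burnside_elem_def by blast
  have fin_supp: "finite {H. c H \<noteq> 0}" using be unfolding burnside_elem_def by blast
  have "{U. mult_normal_sum G N c U \<noteq> 0} \<subseteq> (\<lambda>H. H <#> N) ` {H. c H \<noteq> 0}"
    using mult_normal_sum_support(1)[OF N c] by (intro subsetI) simp
  then have "finite {U. mult_normal_sum G N c U \<noteq> 0}" by (rule finite_surj[OF fin_supp])
  then have be': "burnside_elem G (mult_normal_sum G N c)"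
    unfolding burnside_elem_def using mult_normal_sum_support(2)[OF N c] by blast
  have zero: "\<forall>g\<in>carrier G. fixed_point_sum G (carrier G) c g = 0"
    using rel is_relation_iff[OF fin be] by blast
  have "fixed_point_sum G (carrier G) c (g \<otimes> m) = 0" if g: "g \<in> carrier G" and m: "m \<in> N" for g m
    using zero m_closed[OF g subgroup.mem_carrier[OF normal_imp_subgroup[OF N] m]] by blast
  then show ?thesis
    unfolding is_relation_iff[OF fin be'] using fixed_point_sum_mult_normal_sum[OF fin N _ c fin_supp] by simp
qed

lemma is_relation_quot_sum:
  assumes fin: "finite (carrier G)" and N: "N \<lhd> G" and rel: "is_relation G psi"
    and contains_N: "\<And>U. psi U \<noteq> 0 \<Longrightarrow> N \<subseteq> U"
  shows "is_relation (G Mod N) (quot_sum G N psi)"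
proof -
  let ?img = "\<lambda>U. (\<lambda>u. N #> u) ` U" and ?S = "{U. psi U \<noteq> 0}"
  have finS: "finite ?S" and sub: "\<And>U. psi U \<noteq> 0 \<Longrightarrow> subgroup U G"
    using rel unfolding is_relation_def burnside_elem_def by blast+
  have preimage: "\<exists>U. psi U \<noteq> 0 \<and> ?img U = V" if "quot_sum G N psi V \<noteq> 0" for V
    using that unfolding quot_sum_def by (metis (mono_tags, lifting) empty_Collect_eq sum.empty)
  have supp: "{V. quot_sum G N psi V \<noteq> 0} \<subseteq> ?img ` ?S" using preimage by blast
  have be: "burnside_elem (G Mod N) (quot_sum G N psi)"
    unfolding burnside_elem_def
    using finite_subset[OF supp] finS preimage subgroup_rcos_image[OF N sub] by blast
  have "(\<Sum>V\<in>{V. quot_sum G N psi V \<noteq> 0}. quot_sum G N psi V * int (perm_char (G Mod N) V (N #> g))) = 0"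
    if g: "g \<in> carrier G" for g
  proof -
    have "(\<Sum>V\<in>{V. quot_sum G N psi V \<noteq> 0}. quot_sum G N psi V * int (perm_char (G Mod N) V (N #> g)))
        = (\<Sum>V\<in>?img ` ?S. \<Sum>U\<in>{U \<in> ?S. ?img U = V}. psi U * int (perm_char (G Mod N) (?img U) (N #> g)))"
      using supp finS
      by (subst sum.mono_neutral_left[of "?img ` ?S"]) (auto simp: quot_sum_def sum_distrib_right)
    also have "\<dots> = (\<Sum>U\<in>?S. psi U * int (perm_char (G Mod N) (?img U) (N #> g)))"
      using finS by (intro sum.group) auto
    also have "\<dots> = (\<Sum>U\<in>?S. psi U * int (perm_char G U g))"
      using perm_char_FactGroup[OF fin N sub contains_N g] by simp
    also have "\<dots> = 0" using rel g unfolding is_relation_def by blast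
    finally show ?thesis .
  qed
  moreover have "carrier (G Mod N) = (\<lambda>g. N #> g) ` carrier G"
    unfolding FactGroup_def RCOSETS_def by auto
  ultimately show ?thesis unfolding is_relation_def using be by auto
qed

end

lemma relation_multiple_decomposition:
  fixes G (structure)
  assumes "group G" and fin: "finite (carrier G)" and D: "D \<lhd> G"
    and "conj_action_factors G D n"
    and N: "N \<lhd> G" and ND: "N \<subseteq> D"
    and dichotomy: "\<And>H. subgroup H G \<Longrightarrow> N \<subseteq> H \<or> H \<subseteq> D"
    and rel: "is_relation G c"
  shows "\<exists>c' psi. is_relation (G\<lparr>carrier := D\<rparr>) c' \<and> is_relation G c' \<and>
      is_relation G psi \<and> (\<forall>U. psi U \<noteq> 0 \<longrightarrow> N \<subseteq> U) \<and>
      is_relation (G Mod N) (quot_sum G N psi) \<and>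
      burnside_eq G (\<lambda>H. int n * c H) (\<lambda>H. c' H + psi H)"
proof -
  interpret group G by fact
  let ?p = "mult_normal_sum G N c"
  have c_sub: "\<And>H. c H \<noteq> 0 \<Longrightarrow> subgroup H G"
    using rel unfolding is_relation_def burnside_elem_def by blast
  have p_rel: "is_relation G ?p" using is_relation_mult_normal_sum[OF fin N rel] .
  have diff_rel: "is_relation G (\<lambda>H. c H - ?p H)"
    using is_relation_lincomb[OF rel p_rel, of 1 "-1"] by simp
  have diff_in_D: "H \<subseteq> D" if ne: "c H - ?p H \<noteq> 0" for H
  proof (rule ccontr)
    assume "\<not> H \<subseteq> D"
    moreover have "subgroup H G"
      using ne c_sub mult_normal_sum_support(2)[OF N c_sub] by (cases "c H = 0") auto
    ultimately have "?p H = c H"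
      using mult_normal_sum_eq_outside[OF N normal_imp_subgroup[OF D] ND dichotomy c_sub] by blast
    then show False using ne by simp
  qed
  obtain c' where c': "is_relation (G\<lparr>carrier := D\<rparr>) c'"
    and eq: "burnside_eq G (\<lambda>H. int n * (c H - ?p H)) c'"
    using relation_in_normal_subgroup_multiple_induced[OF assms(1-4) diff_rel diff_in_D] by blast
  define psi where "psi = (\<lambda>H. int n * ?p H)"
  have "burnside_eq G (\<lambda>H. int n * c H) (\<lambda>H. c' H + psi H)"
    using burnside_eq_add[OF fin eq, of psi] by (simp add: psi_def right_diff_distrib)
  moreover have psi_rel: "is_relation G psi"
    using is_relation_lincomb[OF p_rel p_rel, of "int n" 0] by (simp add: psi_def)
  moreover have psi_N: "\<And>U. psi U \<noteq> 0 \<Longrightarrow> N \<subseteq> U"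
    using mult_normal_sum_support(3)[OF N c_sub] unfolding psi_def by simp
  moreover have "is_relation (G Mod N) (quot_sum G N psi)"
    using is_relation_quot_sum[OF fin N psi_rel psi_N] .
  ultimately show ?thesis using c' is_relation_induced[OF fin D c'] by blast
qed

theorem lemma2p5:
  fixes G :: "('a, 'b) monoid_scheme" and D :: "'a set" and n :: nat
  assumes "group G" and "finite (carrier G)" and "D \<lhd> G"
    and "conj_action_factors G D n"
  shows "(\<forall>c. is_relation G c \<and> (\<forall>H. c H \<noteq> 0 \<longrightarrow> H \<subseteq> D) \<longrightarrow>
            (\<exists>c'. is_relation (G\<lparr>carrier := D\<rparr>) c' \<and>
                  burnside_eq G (\<lambda>H. int n * c H) c'))
       \<and> (\<forall>N. N \<lhd> G \<and> N \<subseteq> D \<and> (\<forall>H. subgroup H G \<longrightarrow> N \<subseteq> H \<or> H \<subseteq> D) \<longrightarrow>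
            (\<forall>c. is_relation G c \<longrightarrow>
               (\<exists>c' psi. is_relation (G\<lparr>carrier := D\<rparr>) c' \<and> is_relation G c' \<and>
                  is_relation G psi \<and> (\<forall>U. psi U \<noteq> 0 \<longrightarrow> N \<subseteq> U) \<and>
                  is_relation (G Mod N) (quot_sum G N psi) \<and>
                  burnside_eq G (\<lambda>H. int n * c H) (\<lambda>H. c' H + psi H))))"
  using relation_in_normal_subgroup_multiple_induced[OF assms]
    relation_multiple_decomposition[OF assms] by blast

end
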